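(* Let $k\ge2$ and let $\alpha(x)=\forall y\,([y^{-1}xy,x]=e)$. The first-order group formula $\beta(y)=\forall x\,(\alpha(x)\rightarrow y^{-1}xy=x^k)$ defines in $BS(1,k)$ the set $Ab$.
   Context: $BS(1,k)=\langle a,b\mid b^{-1}ab=a^k\rangle$, identified with $\mathbb{Z}[1/k]\rtimes\mathbb{Z}$ (pairs $(y,m)$, $y\in\mathbb{Z}[1/k]=\{zk^i:z,i\in\mathbb{Z}\}$, product $(y_1,m_1)(y_2,m_2)=(y_1+y_2k^{-m_1},m_1+m_2)$), with $a=(1,0)$, $b=(0,1)$; $a^y=(y,0)$ for $y\in\mathbb{Z}[1/k]$. $Ab=\{a^yb:y\in\mathbb{Z}[1/k]\}=\{(y,1):y\in\mathbb{Z}[1/k]\}$. The commutator is $[x,y]=x^{-1}y^{-1}xy$. *)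

theory Defs
  imports Complex_Main "HOL-Algebra.Group"
begin

definition Zk :: "nat \<Rightarrow> rat set" where
  "Zk k = {of_int z * (of_nat k) powi i | z i. True}"

text \<open>BS(1,k) = Z[1/k] semidirect Z, pairs (y,m), with
  (y1,m1)(y2,m2) = (y1 + y2 k^(-m1), m1+m2); a = (1,0), b = (0,1).\<close>
definition BS :: "nat \<Rightarrow> (rat \<times> int) monoid" where
  "BS k = \<lparr> carrier = Zk k \<times> UNIV,
            mult = (\<lambda>(y1, m1) (y2, m2). (y1 + y2 * (of_nat k) powi (- m1), m1 + m2)),
            one = (0, 0) \<rparr>"

definition commutator :: "('a, 'b) monoid_scheme \<Rightarrow> 'a \<Rightarrow> 'a \<Rightarrow> 'a" where
  "commutator G x y = inv\<^bsub>G\<^esub> x \<otimes>\<^bsub>G\<^esub> inv\<^bsub>G\<^esub> y \<otimes>\<^bsub>G\<^esub> x \<otimes>\<^bsub>G\<^esub> y"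

definition alpha_formula :: "('a, 'b) monoid_scheme \<Rightarrow> 'a \<Rightarrow> bool" where
  "alpha_formula G x = (\<forall>y\<in>carrier G.
      commutator G (inv\<^bsub>G\<^esub> y \<otimes>\<^bsub>G\<^esub> x \<otimes>\<^bsub>G\<^esub> y) x = \<one>\<^bsub>G\<^esub>)"

definition beta_formula :: "('a, 'b) monoid_scheme \<Rightarrow> nat \<Rightarrow> 'a \<Rightarrow> bool" where
  "beta_formula G k y = (\<forall>x\<in>carrier G.
      alpha_formula G x \<longrightarrow> inv\<^bsub>G\<^esub> y \<otimes>\<^bsub>G\<^esub> x \<otimes>\<^bsub>G\<^esub> y = x [^]\<^bsub>G\<^esub> k)"

text \<open>Ab = { a^y b : y in Z[1/k] } = { (y,1) : y in Z[1/k] }.\<close>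
definition Ab :: "nat \<Rightarrow> (rat \<times> int) set" where
  "Ab k = {(y, 1) | y. y \<in> Zk k}"

end

theory Submission
  imports Defs
begin

text \<open>
  The formula alpha defines the base \<open>{(y, 0)}\<close> of \<open>BS(1,k)\<close>. The base is an abelian normal
  subgroup, so every base element commutes with all of its conjugates. Conversely, for
  \<open>x = (z, m)\<close> the conjugate \<open>a\<^sup>-\<^sup>1 x a = (z - 1 + q, m)\<close> with \<open>q = k\<^sup>-\<^sup>m\<close> commutes with \<open>x\<close> only if
  \<open>(q - 1)\<^sup>2 = 0\<close>, i.e. \<open>m = 0\<close>. Conjugation by \<open>(w, n)\<close> acts on the base as multiplication by
  \<open>k\<^sup>n\<close>, whereas \<open>x \<mapsto> x\<^sup>k\<close> is multiplication by \<open>k\<close>; testing on \<open>a\<close>, beta holds at \<open>(w, n)\<close> iff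
  \<open>k\<^sup>n = k\<close>, i.e. \<open>n = 1\<close>.
\<close>

lemma power_int_inject:
  fixes a :: "'a::linordered_field"
  assumes "1 < a"
  shows "power_int a m = power_int a n \<longleftrightarrow> m = n"
  using power_int_strict_increasing[OF _ assms, of m n] power_int_strict_increasing[OF _ assms, of n m]
  by (cases m n rule: linorder_cases) auto

lemma (in group) commutator_eq_one_iff:
  assumes "u \<in> carrier G" "v \<in> carrier G"
  shows "commutator G u v = \<one> \<longleftrightarrow> u \<otimes> v = v \<otimes> u"
proof -
  have "commutator G u v = inv (v \<otimes> u) \<otimes> (u \<otimes> v)"
    using assms by (simp add: commutator_def inv_mult_group m_assoc)
  also have "\<dots> = \<one> \<longleftrightarrow> u \<otimes> v = v \<otimes> u"
    using assms by (metis inv_closed inv_equality inv_inv l_inv m_closed)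
  finally show ?thesis .
qed

lemma of_int_in_Zk: "of_int z \<in> Zk k"
  unfolding Zk_def by (rule CollectI, rule exI[of _ z], rule exI[of _ 0]) simp

lemma Zk_uminus: "a \<in> Zk k \<Longrightarrow> - a \<in> Zk k"
  unfolding Zk_def by (force intro: exI[of _ "- z" for z])

lemma Zk_mult_powi:
  assumes "k > 0" "a \<in> Zk k"
  shows "a * of_nat k powi j \<in> Zk k"
proof -
  obtain z i where "a = of_int z * of_nat k powi i"
    using assms(2) unfolding Zk_def by blast
  then have "a * of_nat k powi j = of_int z * of_nat k powi (i + j)"
    using assms(1) by (simp add: power_int_add)
  then show ?thesis
    unfolding Zk_def by blast
qed

lemma Zk_add:
  assumes "k > 0" "a \<in> Zk k" "b \<in> Zk k"
  shows "a + b \<in> Zk k"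
proof -
  have sum_in_Zk: "of_int z1 * of_nat k powi i1 + of_int z2 * of_nat k powi i2 \<in> Zk k"
    if "i1 \<le> i2" for z1 z2 i1 i2
  proof -
    have "(of_nat k :: rat) powi i2 = of_nat k ^ nat (i2 - i1) * of_nat k powi i1"
      using assms(1) that by (simp flip: power_int_add power_int_of_nat)
    then have "of_int z1 * of_nat k powi i1 + of_int z2 * of_nat k powi i2
        = of_int (z1 + z2 * int k ^ nat (i2 - i1)) * (of_nat k :: rat) powi i1"
      by (simp add: algebra_simps)
    then show ?thesis
      unfolding Zk_def by blast
  qed
  obtain z1 i1 z2 i2 where "a = of_int z1 * of_nat k powi i1" "b = of_int z2 * of_nat k powi i2"
    using assms(2,3) unfolding Zk_def by blast
  then show ?thesis
    using sum_in_Zk[of i1 i2 z1 z2] sum_in_Zk[of i2 i1 z2 z1] by (cases "i1 \<le> i2") (simp_all add: add.commute)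
qed

lemma BS_carrier: "carrier (BS k) = Zk k \<times> UNIV"
  by (simp add: BS_def)

lemma BS_one: "\<one>\<^bsub>BS k\<^esub> = (0, 0)"
  by (simp add: BS_def)

lemma BS_mult: "(y1, m1) \<otimes>\<^bsub>BS k\<^esub> (y2, m2) = (y1 + y2 * of_nat k powi (- m1), m1 + m2)"
  by (simp add: BS_def)

lemma group_BS:
  assumes "k > 0"
  shows "group (BS k)"
proof (rule groupI)
  fix x y
  assume "x \<in> carrier (BS k)" "y \<in> carrier (BS k)"
  then show "x \<otimes>\<^bsub>BS k\<^esub> y \<in> carrier (BS k)"
    using assms by (cases x, cases y) (auto simp: BS_carrier BS_mult intro!: Zk_add Zk_mult_powi)
next
  show "\<one>\<^bsub>BS k\<^esub> \<in> carrier (BS k)"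
    using of_int_in_Zk[of 0 k] by (simp add: BS_carrier BS_one)
next
  fix x y z
  have "(of_nat k :: rat) powi (- m - n) = of_nat k powi (- m) * of_nat k powi (- n)" for m n
    using assms by (simp flip: power_int_add)
  then show "x \<otimes>\<^bsub>BS k\<^esub> y \<otimes>\<^bsub>BS k\<^esub> z = x \<otimes>\<^bsub>BS k\<^esub> (y \<otimes>\<^bsub>BS k\<^esub> z)"
    by (cases x, cases y, cases z) (simp add: BS_mult algebra_simps)
next
  fix x
  show "\<one>\<^bsub>BS k\<^esub> \<otimes>\<^bsub>BS k\<^esub> x = x"
    by (cases x) (simp add: BS_mult BS_one)
next
  fix x
  assume x: "x \<in> carrier (BS k)"
  obtain w n where xw: "x = (w, n)"
    by (cases x)
  have "(- w * of_nat k powi n, - n) \<in> carrier (BS k)"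
    using x xw assms by (simp add: BS_carrier Zk_mult_powi Zk_uminus)
  moreover have "(- w * of_nat k powi n, - n) \<otimes>\<^bsub>BS k\<^esub> x = \<one>\<^bsub>BS k\<^esub>"
    using assms by (simp add: xw BS_mult BS_one flip: power_int_add)
  ultimately show "\<exists>y\<in>carrier (BS k). y \<otimes>\<^bsub>BS k\<^esub> x = \<one>\<^bsub>BS k\<^esub>"
    by blast
qed

lemma BS_inv:
  assumes "k > 0" "(w, n) \<in> carrier (BS k)"
  shows "inv\<^bsub>BS k\<^esub> (w, n) = (- w * of_nat k powi n, - n)"
proof -
  interpret group "BS k"
    using group_BS assms(1) .
  have "(- w * of_nat k powi n, - n) \<in> carrier (BS k)"
    using assms by (simp add: BS_carrier Zk_mult_powi Zk_uminus)
  then show ?thesis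
    using assms by (intro inv_equality) (simp_all add: BS_mult BS_one flip: power_int_add)
qed

lemma BS_pow_base: "(z, 0) [^]\<^bsub>BS k\<^esub> (n::nat) = (of_nat n * z, 0)"
  by (induction n) (simp_all add: BS_one BS_mult algebra_simps)

lemma BS_conj_base:
  assumes "k > 0" "(w, n) \<in> carrier (BS k)"
  shows "inv\<^bsub>BS k\<^esub> (w, n) \<otimes>\<^bsub>BS k\<^esub> (z, 0) \<otimes>\<^bsub>BS k\<^esub> (w, n) = (z * of_nat k powi n, 0)"
  using assms by (simp add: BS_inv BS_mult algebra_simps)

lemma alpha_formula_BS_base:
  assumes "k > 0" "z \<in> Zk k"
  shows "alpha_formula (BS k) (z, 0)"
  unfolding alpha_formula_def
proof
  interpret group "BS k"
    using group_BS assms(1) .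
  fix y
  assume y: "y \<in> carrier (BS k)"
  obtain w n where yw: "y = (w, n)"
    by (cases y)
  let ?c = "z * of_nat k powi n"
  have "inv\<^bsub>BS k\<^esub> y \<otimes>\<^bsub>BS k\<^esub> (z, 0) \<otimes>\<^bsub>BS k\<^esub> y = (?c, 0)"
    using BS_conj_base assms(1) y yw by simp
  moreover have "(?c, 0) \<in> carrier (BS k)"
    using assms by (simp add: BS_carrier Zk_mult_powi)
  moreover have "(?c, 0) \<otimes>\<^bsub>BS k\<^esub> (z, 0) = (z, 0) \<otimes>\<^bsub>BS k\<^esub> (?c, 0)"
    by (simp add: BS_mult)
  ultimately show "commutator (BS k) (inv\<^bsub>BS k\<^esub> y \<otimes>\<^bsub>BS k\<^esub> (z, 0) \<otimes>\<^bsub>BS k\<^esub> y) (z, 0) = \<one>\<^bsub>BS k\<^esub>"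
    using assms by (simp add: commutator_eq_one_iff BS_carrier)
qed

lemma alpha_formula_BS_imp_base:
  assumes "k \<ge> 2" "(z, m) \<in> carrier (BS k)" "alpha_formula (BS k) (z, m)"
  shows "m = 0"
proof -
  interpret group "BS k"
    using group_BS assms(1) by simp
  define q where "q = (of_nat k :: rat) powi (- m)"
  have a: "(1, 0) \<in> carrier (BS k)"
    using of_int_in_Zk[of 1 k] by (simp add: BS_carrier)
  have conj: "inv\<^bsub>BS k\<^esub> (1, 0) \<otimes>\<^bsub>BS k\<^esub> (z, m) \<otimes>\<^bsub>BS k\<^esub> (1, 0) = (z - 1 + q, m)"
    using assms(1) a by (simp add: BS_inv BS_mult q_def)
  then have "(z - 1 + q, m) \<in> carrier (BS k)"
    using a assms(2) by (metis inv_closed m_closed)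
  moreover have "commutator (BS k) (z - 1 + q, m) (z, m) = \<one>\<^bsub>BS k\<^esub>"
    using assms(3) a conj unfolding alpha_formula_def by metis
  ultimately have "(z - 1 + q, m) \<otimes>\<^bsub>BS k\<^esub> (z, m) = (z, m) \<otimes>\<^bsub>BS k\<^esub> (z - 1 + q, m)"
    using commutator_eq_one_iff assms(2) by blast
  then have "(q - 1) * (q - 1) = 0"
    by (simp add: BS_mult q_def algebra_simps)
  then have "(of_nat k :: rat) powi (- m) = of_nat k powi 0"
    by (simp add: q_def)
  moreover have "1 < (of_nat k :: rat)"
    using assms(1) by simp
  ultimately show "m = 0"
    using power_int_inject[of "of_nat k :: rat" "- m" 0] by simp
qed

lemma alpha_formula_BS_iff:
  assumes "k \<ge> 2" "(z, m) \<in> carrier (BS k)"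
  shows "alpha_formula (BS k) (z, m) \<longleftrightarrow> m = 0"
  using assms alpha_formula_BS_imp_base alpha_formula_BS_base[of k z] by (auto simp: BS_carrier)

lemma beta_formula_BS_iff:
  assumes "k \<ge> 2" "(w, n) \<in> carrier (BS k)"
  shows "beta_formula (BS k) k (w, n) \<longleftrightarrow> n = 1"
proof
  assume beta: "beta_formula (BS k) k (w, n)"
  have a: "(1, 0) \<in> carrier (BS k)"
    using of_int_in_Zk[of 1 k] by (simp add: BS_carrier)
  then have "inv\<^bsub>BS k\<^esub> (w, n) \<otimes>\<^bsub>BS k\<^esub> (1, 0) \<otimes>\<^bsub>BS k\<^esub> (w, n) = (1, 0) [^]\<^bsub>BS k\<^esub> k"
    using beta assms(1) alpha_formula_BS_iff unfolding beta_formula_def by blast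
  then have "(of_nat k :: rat) powi n = of_nat k powi 1"
    using assms BS_conj_base[of k w n 1] by (simp add: BS_pow_base)
  moreover have "1 < (of_nat k :: rat)"
    using assms(1) by simp
  ultimately show "n = 1"
    using power_int_inject[of "of_nat k :: rat" n 1] by simp
next
  assume "n = 1"
  then show "beta_formula (BS k) k (w, n)"
    using assms alpha_formula_BS_iff BS_conj_base[of k w n]
    by (auto simp: beta_formula_def BS_pow_base mult.commute)
qed

theorem lemma4p5:
  fixes k :: nat
  assumes "k \<ge> 2"
  shows "{y \<in> carrier (BS k). beta_formula (BS k) k y} = Ab k"
  using beta_formula_BS_iff[OF assms] by (auto simp: Ab_def BS_carrier)

end
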